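(* Let $G$ be a finite group, $p\neq q$ odd primes, $P$ a $p$-subgroup and $Q_1\le Q$ $q$-subgroups of $G$. Assume $P$ normalizes $Q_1$ and $Q$ normalizes $Q_1P$. Then $QP$ is a subgroup of $G$ with $Q$ a Sylow $q$-subgroup and $P$ a Sylow $p$-subgroup of $QP$, and $Q_1P\trianglelefteq QP$, $Q_1\trianglelefteq QP$. Moreover $Q=[Q_1,P]\,N_Q(P)$, where $[Q_1,P]\trianglelefteq QP$ and $[Q_1,P]\cap N_Q(P)=C_{[Q_1,P]}(P)\le\Phi([Q_1,P])$.
   Context: $\Phi(X)$ is the Frattini subgroup of $X$; $[Q_1,P]$ is the commutator subgroup. *)

theory Defs
  imports "HOL-Algebra.Algebra"
begin

definition commutator_subgroup :: "('a, 'b) monoid_scheme \<Rightarrow> 'a set \<Rightarrow> 'a set \<Rightarrow> 'a set" where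
  "commutator_subgroup G A B =
     generate G {a \<otimes>\<^bsub>G\<^esub> b \<otimes>\<^bsub>G\<^esub> inv\<^bsub>G\<^esub> a \<otimes>\<^bsub>G\<^esub> inv\<^bsub>G\<^esub> b | a b. a \<in> A \<and> b \<in> B}"

definition centralizer_in :: "('a, 'b) monoid_scheme \<Rightarrow> 'a set \<Rightarrow> 'a set \<Rightarrow> 'a set" where
  "centralizer_in G H S = {h \<in> H. \<forall>x \<in> S. h \<otimes>\<^bsub>G\<^esub> x = x \<otimes>\<^bsub>G\<^esub> h}"

definition maximal_subgroup_of :: "('a, 'b) monoid_scheme \<Rightarrow> 'a set \<Rightarrow> 'a set \<Rightarrow> bool" where
  "maximal_subgroup_of G M H \<longleftrightarrow> subgroup M G \<and> M \<subset> H \<and>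
     (\<forall>K. subgroup K G \<and> M \<subseteq> K \<and> K \<subseteq> H \<longrightarrow> K = M \<or> K = H)"

text \<open>Frattini subgroup of H: intersection of all maximal subgroups of H (H itself if none).\<close>
definition frattini :: "('a, 'b) monoid_scheme \<Rightarrow> 'a set \<Rightarrow> 'a set" where
  "frattini G H = H \<inter> \<Inter> {M. maximal_subgroup_of G M H}"

definition p_subgroup :: "('a, 'b) monoid_scheme \<Rightarrow> nat \<Rightarrow> 'a set \<Rightarrow> bool" where
  "p_subgroup G p H \<longleftrightarrow> subgroup H G \<and> (\<exists>n. card H = p ^ n)"

definition sylow_subgroup :: "('a, 'b) monoid_scheme \<Rightarrow> nat \<Rightarrow> 'a set \<Rightarrow> bool" where
  "sylow_subgroup G p H \<longleftrightarrow> subgroup H G \<and> card H = p ^ multiplicity p (order G)"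

end

theory Submission
  imports Defs
begin

text \<open>
  Since \<open>P\<close> normalises \<open>Q\<^sub>1\<close> and \<open>Q\<close> normalises \<open>Q\<^sub>1P\<close>, the product \<open>QP = Q(Q\<^sub>1P)\<close> is a
  subgroup of order \<open>|Q||P|\<close>, and \<open>Q \<inter> Q\<^sub>1P = Q\<^sub>1\<close> shows that \<open>Q\<close> normalises \<open>Q\<^sub>1\<close>.
  Two fixed-point arguments, both resting on \<open>|S| \<equiv> |Fix(S)| (mod p)\<close> for an action of a
  \<open>p\<close>-group on a finite set \<open>S\<close>, give the decomposition of \<open>Q\<close>: the Frattini argument
  (\<open>P\<close> is a Sylow subgroup of \<open>Q\<^sub>1P\<close>) yields \<open>Q = Q\<^sub>1 N\<^sub>Q(P)\<close>, and letting \<open>P\<close> act by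
  conjugation on the cosets of \<open>K = [Q\<^sub>1, P]\<close> yields \<open>Q\<^sub>1 = K C\<^sub>Q\<^sub>1(P)\<close> with
  \<open>C\<^sub>Q\<^sub>1(P) \<subseteq> N\<^sub>Q(P)\<close>.  An element of \<open>K\<close> normalising \<open>P\<close> centralises it because its
  commutators with \<open>P\<close> lie in \<open>K \<inter> P = 1\<close>.

  For the Frattini subgroup, the same decomposition gives \<open>K = [K, P]\<close>.  A maximal subgroup
  \<open>M\<close> of the \<open>q\<close>-group \<open>K\<close> is normal with abelian quotient, and the norm map
  \<open>x \<mapsto> \<Prod>a\<in>P. M a x a\<inverse>\<close> from \<open>K\<close> to \<open>K/M\<close> is a homomorphism killing \<open>[K, P] = K\<close>
  that raises elements of \<open>C\<^sub>K(P)\<close> to the power \<open>|P|\<close>; as \<open>|P|\<close> is prime to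
  \<open>|K/M|\<close>, \<open>C\<^sub>K(P) \<subseteq> M\<close>.
\<close>

context group begin

section \<open>Normalizers\<close>

lemma mult_inv_cancel_left [simp]:
  "x \<in> carrier G \<Longrightarrow> y \<in> carrier G \<Longrightarrow> x \<otimes> (inv x \<otimes> y) = y"
  by (simp flip: m_assoc)

lemma inv_mult_cancel_left [simp]:
  "x \<in> carrier G \<Longrightarrow> y \<in> carrier G \<Longrightarrow> inv x \<otimes> (x \<otimes> y) = y"
  by (simp flip: m_assoc)

lemma conj_image_eq_coset:
  "H \<subseteq> carrier G \<Longrightarrow> g \<in> carrier G \<Longrightarrow> g <# H #> inv g = (\<lambda>h. g \<otimes> h \<otimes> inv g) ` H"
  unfolding l_coset_def r_coset_def by auto

lemma normalizer_iff:
  assumes "H \<subseteq> carrier G"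
  shows "g \<in> normalizer G H \<longleftrightarrow> g \<in> carrier G \<and> (\<lambda>h. g \<otimes> h \<otimes> inv g) ` H = H"
  using assms conj_image_eq_coset unfolding normalizer_def stabilizer_def by auto

lemma normalizer_conj_closed:
  assumes "H \<subseteq> carrier G" "g \<in> normalizer G H" "h \<in> H"
  shows "g \<otimes> h \<otimes> inv g \<in> H"
  using assms normalizer_iff by blast

lemma normalizer_subset_carrier: "H \<subseteq> carrier G \<Longrightarrow> normalizer G H \<subseteq> carrier G"
  using normalizer_iff by blast

lemma normalizerI:
  assumes H: "H \<subseteq> carrier G" and g: "g \<in> carrier G"
    and conj: "\<And>h. h \<in> H \<Longrightarrow> g \<otimes> h \<otimes> inv g \<in> H"
    and conj_inv: "\<And>h. h \<in> H \<Longrightarrow> inv g \<otimes> h \<otimes> g \<in> H"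
  shows "g \<in> normalizer G H"
proof -
  have "h \<in> (\<lambda>h. g \<otimes> h \<otimes> inv g) ` H" if "h \<in> H" for h
  proof
    show "h = g \<otimes> (inv g \<otimes> h \<otimes> g) \<otimes> inv g"
      using that H g by (simp add: m_assoc subsetD)
  qed (use conj_inv that in blast)
  then show ?thesis
    using normalizer_iff[OF H] g conj by blast
qed

lemma finite_normalizerI:
  assumes fin: "finite H" and H: "H \<subseteq> carrier G" and g: "g \<in> carrier G"
    and conj: "\<And>h. h \<in> H \<Longrightarrow> g \<otimes> h \<otimes> inv g \<in> H"
  shows "g \<in> normalizer G H"
proof -
  have "inj_on (\<lambda>h. g \<otimes> h \<otimes> inv g) H"
    by (rule inj_onI) (use H g in \<open>auto simp: subsetD\<close>)
  then have "card ((\<lambda>h. g \<otimes> h \<otimes> inv g) ` H) = card H"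
    by (rule card_image)
  moreover have "(\<lambda>h. g \<otimes> h \<otimes> inv g) ` H \<subseteq> H"
    using conj by blast
  ultimately have "(\<lambda>h. g \<otimes> h \<otimes> inv g) ` H = H"
    using card_subset_eq[OF fin] by blast
  then show ?thesis
    using normalizer_iff[OF H] g by blast
qed

lemma subgroup_subset_normalizer:
  assumes "subgroup H G"
  shows "H \<subseteq> normalizer G H"
proof
  fix g assume g: "g \<in> H"
  interpret H: subgroup H G by fact
  show "g \<in> normalizer G H"
    by (rule normalizerI) (use g in auto)
qed

lemma normalizer_Int_subset:
  assumes A: "A \<subseteq> carrier G" and B: "B \<subseteq> carrier G"
  shows "normalizer G A \<inter> normalizer G B \<subseteq> normalizer G (A \<inter> B)"
proof
  fix g assume "g \<in> normalizer G A \<inter> normalizer G B"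
  then have g: "g \<in> carrier G"
    and conj_A: "(\<lambda>h. g \<otimes> h \<otimes> inv g) ` A = A" and conj_B: "(\<lambda>h. g \<otimes> h \<otimes> inv g) ` B = B"
    using normalizer_iff A B by auto
  have "inj_on (\<lambda>h. g \<otimes> h \<otimes> inv g) (carrier G)"
    by (rule inj_onI) (use g in auto)
  then have "(\<lambda>h. g \<otimes> h \<otimes> inv g) ` (A \<inter> B) = A \<inter> B"
    using inj_on_image_Int[OF _ A B] conj_A conj_B by metis
  then show "g \<in> normalizer G (A \<inter> B)"
    using normalizer_iff[of "A \<inter> B"] A g by blast
qed

lemma normal_in_subgroupI:
  assumes N: "subgroup N G" and J: "subgroup J G" and NJ: "N \<subseteq> J"
    and JN: "J \<subseteq> normalizer G N"
  shows "N \<lhd> G\<lparr>carrier := J\<rparr>"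
proof -
  interpret J: group "G\<lparr>carrier := J\<rparr>"
    using subgroup_imp_group[OF J] .
  show ?thesis
  proof (rule J.normal_invI)
    show "subgroup N (G\<lparr>carrier := J\<rparr>)"
      using subgroup_incl[OF N J NJ] .
    fix x h assume "x \<in> carrier (G\<lparr>carrier := J\<rparr>)" "h \<in> N"
    then show "x \<otimes>\<^bsub>G\<lparr>carrier := J\<rparr>\<^esub> h \<otimes>\<^bsub>G\<lparr>carrier := J\<rparr>\<^esub> inv\<^bsub>G\<lparr>carrier := J\<rparr>\<^esub> x \<in> N"
      using normalizer_conj_closed[OF subgroup.subset[OF N]] JN m_inv_consistent[OF J] by auto
  qed
qed

lemma conj_group_hom:
  assumes "g \<in> carrier G"
  shows "group_hom G G (\<lambda>x. g \<otimes> x \<otimes> inv g)"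
proof (rule group_hom.intro[OF is_group is_group])
  show "group_hom_axioms G G (\<lambda>x. g \<otimes> x \<otimes> inv g)"
    by (rule group_hom_axioms.intro, rule homI) (use assms in \<open>simp_all add: m_assoc\<close>)
qed

lemma conj_image_subgroup:
  assumes x: "x \<in> carrier G" and P: "subgroup P G"
  shows "subgroup ((\<lambda>a. x \<otimes> a \<otimes> inv x) ` P) G" and "card ((\<lambda>a. x \<otimes> a \<otimes> inv x) ` P) = card P"
proof -
  interpret c: group_hom G G "\<lambda>a. x \<otimes> a \<otimes> inv x"
    using conj_group_hom[OF x] .
  show "subgroup ((\<lambda>a. x \<otimes> a \<otimes> inv x) ` P) G"
    using c.subgroup_img_is_subgroup[OF P] .
  have "inj_on (\<lambda>a. x \<otimes> a \<otimes> inv x) P"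
    by (rule inj_onI) (use x subgroup.subset[OF P] in \<open>auto simp: subsetD\<close>)
  then show "card ((\<lambda>a. x \<otimes> a \<otimes> inv x) ` P) = card P"
    by (rule card_image)
qed

section \<open>Products of subgroups\<close>

lemma set_mult_subset_subgroup:
  assumes "subgroup H G" "A \<subseteq> H" "B \<subseteq> H"
  shows "A <#> B \<subseteq> H"
  using mono_set_mult[OF assms(2,3)] subgroup_mult_id[OF assms(1)] by blast

lemma subset_set_mult_left:
  assumes "H \<subseteq> carrier G" "subgroup K G"
  shows "H \<subseteq> H <#> K"
proof
  fix h assume h: "h \<in> H"
  then have "h \<otimes> \<one> \<in> H <#> K"
    unfolding set_mult_def using subgroup.one_closed[OF assms(2)] by blast
  then show "h \<in> H <#> K"
    using h assms(1) by auto
qed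

lemma subset_set_mult_right:
  assumes "subgroup H G" "K \<subseteq> carrier G"
  shows "K \<subseteq> H <#> K"
proof
  fix k assume k: "k \<in> K"
  then have "\<one> \<otimes> k \<in> H <#> K"
    unfolding set_mult_def using subgroup.one_closed[OF assms(1)] by blast
  then show "k \<in> H <#> K"
    using k assms(2) by auto
qed

lemma set_mult_subgroup_absorb_left:
  assumes H: "subgroup H G" and K: "subgroup K G" and KH: "K \<subseteq> H"
  shows "K <#> H = H"
  using set_mult_subset_subgroup[OF H KH subset_refl] subset_set_mult_right[OF K subgroup.subset[OF H]]
  by blast

lemma subgroup_set_mult_normalizer:
  assumes N: "subgroup N G" and H: "subgroup H G" and HN: "H \<subseteq> normalizer G N"
  shows "subgroup (N <#> H) G" and "N <#> H = H <#> N"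
proof -
  have NG: "subgroup (normalizer G N) G"
    using normalizer_imp_subgroup[OF subgroup.subset[OF N]] .
  have N_normal: "N \<lhd> G\<lparr>carrier := normalizer G N\<rparr>"
    using subgroup_in_normalizer[OF N] .
  have H_sub: "subgroup H (G\<lparr>carrier := normalizer G N\<rparr>)"
    using subgroup_incl[OF H NG HN] .
  show "subgroup (N <#> H) G"
    using incl_subgroup[OF NG mult_norm_sub_in_sub[OF N_normal H_sub NG]] .
  show "N <#> H = H <#> N"
    using commut_normal_subgroup[OF NG N_normal H_sub] by simp
qed

lemma set_mult_Int_subgroup:
  assumes Q: "subgroup Q G" and AQ: "A \<subseteq> Q" and B: "B \<subseteq> carrier G"
  shows "Q \<inter> (A <#> B) = A <#> (Q \<inter> B)"
proof
  interpret Q: subgroup Q G by fact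
  show "Q \<inter> (A <#> B) \<subseteq> A <#> (Q \<inter> B)"
  proof
    fix x assume "x \<in> Q \<inter> (A <#> B)"
    then obtain a b where x: "x \<in> Q" "a \<in> A" "b \<in> B" "x = a \<otimes> b"
      unfolding set_mult_def by auto
    have "b = inv a \<otimes> x"
      using x AQ B by (auto simp: subsetD)
    moreover have "inv a \<otimes> x \<in> Q"
      using x AQ by (blast intro: Q.m_closed Q.m_inv_closed)
    ultimately have "b \<in> Q"
      by simp
    then show "x \<in> A <#> (Q \<inter> B)"
      using x unfolding set_mult_def by auto
  qed
  show "A <#> (Q \<inter> B) \<subseteq> Q \<inter> (A <#> B)"
    using set_mult_subset_subgroup[OF Q AQ] mono_set_mult[of A A "Q \<inter> B" B] by auto
qed

lemma card_subgroup_dvd: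
  assumes "subgroup H G" "subgroup K G" "H \<subseteq> K"
  shows "card H dvd card K"
proof -
  interpret K: group "G\<lparr>carrier := K\<rparr>"
    using subgroup_imp_group[OF assms(2)] .
  have "card (rcosets\<^bsub>G\<lparr>carrier := K\<rparr>\<^esub> H) * card H = card K"
    using K.lagrange[OF subgroup_incl[OF assms]] by (simp add: order_def)
  then show ?thesis
    by (metis dvd_triv_right)
qed

lemma coprime_subgroups_Int:
  assumes H: "subgroup H G" and K: "subgroup K G" and cop: "coprime (card H) (card K)"
  shows "H \<inter> K = {\<one>}"
proof -
  have HK: "subgroup (H \<inter> K) G"
    using subgroups_Inter_pair[OF H K] .
  have "card (H \<inter> K) dvd card H" "card (H \<inter> K) dvd card K"
    using card_subgroup_dvd[OF HK] H K by auto
  then have "card (H \<inter> K) = 1"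
    using cop by (metis coprime_common_divisor_nat)
  then show ?thesis
    using subgroup.one_closed[OF HK] by (metis card_1_singletonE singletonD)
qed

lemma card_set_mult_Int_one:
  assumes fin: "finite H" "finite K" and H: "subgroup H G" and K: "subgroup K G"
    and HK: "H \<inter> K = {\<one>}"
  shows "card (H <#> K) = card H * card K"
proof -
  interpret H: subgroup H G by fact
  interpret K: subgroup K G by fact
  have "inj_on (\<lambda>(h, k). h \<otimes> k) (H \<times> K)"
  proof (rule inj_onI, clarify)
    fix h k h' k' assume hk: "h \<in> H" "k \<in> K" "h' \<in> H" "k' \<in> K" "h \<otimes> k = h' \<otimes> k'"
    then have c: "h \<in> carrier G" "k \<in> carrier G" "h' \<in> carrier G" "k' \<in> carrier G"
      by auto
    have "inv h' \<otimes> h = inv h' \<otimes> (h \<otimes> k) \<otimes> inv k"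
      using c by (simp add: m_assoc)
    also have "\<dots> = k' \<otimes> inv k"
      using c hk(5) by (simp add: m_assoc)
    finally have "inv h' \<otimes> h = k' \<otimes> inv k" .
    moreover have "inv h' \<otimes> h \<in> H" "k' \<otimes> inv k \<in> K"
      using hk by auto
    ultimately have "inv h' \<otimes> h = \<one>" "k' \<otimes> inv k = \<one>"
      using HK by auto
    moreover have "h = h' \<otimes> (inv h' \<otimes> h)" "k' = (k' \<otimes> inv k) \<otimes> k"
      using c by (simp_all add: m_assoc)
    ultimately show "h = h' \<and> k = k'"
      using c by simp
  qed
  moreover have "H <#> K = (\<lambda>(h, k). h \<otimes> k) ` (H \<times> K)"
    unfolding set_mult_def by auto
  ultimately show ?thesis
    using card_image card_cartesian_product by metis
qed

lemma sylow_subgroup_of_coprime_index: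
  assumes S: "subgroup S G" and H: "subgroup H G" and HS: "H \<subseteq> S"
    and card_H: "card H = p ^ n" and p: "Factorial_Ring.prime p"
    and card_S: "card S = card H * m" and not_dvd: "\<not> p dvd m"
  shows "sylow_subgroup (G\<lparr>carrier := S\<rparr>) p H"
proof -
  have "m \<noteq> 0"
    using not_dvd by (metis dvd_0_right)
  then have "multiplicity p (p ^ n * m) = multiplicity p (p ^ n) + multiplicity p m"
    using prime_elem_multiplicity_mult_distrib[of p "p ^ n" m] p prime_gt_0_nat[OF p] by simp
  also have "\<dots> = n"
    using p not_dvd by (simp add: not_dvd_imp_multiplicity_0)
  finally show ?thesis
    unfolding sylow_subgroup_def order_def using subgroup_incl[OF H S HS] card_S card_H by simp
qed

lemma normal_in_set_mult:
  assumes N: "subgroup N G" and Q: "subgroup Q G" and P: "subgroup P G"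
    and QP: "subgroup (Q <#> P) G" and N_sub: "N \<subseteq> Q <#> P"
    and QN: "Q \<subseteq> normalizer G N" and PN: "P \<subseteq> normalizer G N"
  shows "N \<lhd> G\<lparr>carrier := Q <#> P\<rparr>"
proof (rule normal_in_subgroupI[OF N QP N_sub])
  show "Q <#> P \<subseteq> normalizer G N"
    using set_mult_subset_subgroup[OF normalizer_imp_subgroup[OF subgroup.subset[OF N]] QN PN] .
qed

lemma normalizer_subset_of_set_mult:
  assumes Q: "subgroup Q G" and Q1: "subgroup Q1 G" and Q1Q: "Q1 \<subseteq> Q" and P: "P \<subseteq> carrier G"
    and QN: "Q \<subseteq> normalizer G (Q1 <#> P)" and QP: "Q \<inter> P = {\<one>}"
  shows "Q \<subseteq> normalizer G Q1"
proof -
  have Q_carrier: "Q \<subseteq> carrier G" and Q1_carrier: "Q1 \<subseteq> carrier G"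
    using Q Q1 subgroup.subset by auto
  have "Q \<inter> (Q1 <#> P) = Q1 <#> (Q \<inter> P)"
    using set_mult_Int_subgroup[OF Q Q1Q P] .
  also have "\<dots> = Q1"
    unfolding QP using Q1_carrier by (simp flip: r_coset_eq_set_mult)
  finally have Q1_eq: "Q \<inter> (Q1 <#> P) = Q1" .
  have "Q \<subseteq> normalizer G Q \<inter> normalizer G (Q1 <#> P)"
    using subgroup_subset_normalizer[OF Q] QN by blast
  also have "\<dots> \<subseteq> normalizer G (Q \<inter> (Q1 <#> P))"
    using normalizer_Int_subset[OF Q_carrier set_mult_closed[OF Q1_carrier P]] .
  finally show ?thesis
    unfolding Q1_eq .
qed

lemma subgroup_set_mult_of_normalizer_set_mult:
  assumes Q: "subgroup Q G" and Q1: "subgroup Q1 G" and Q1Q: "Q1 \<subseteq> Q" and P: "subgroup P G"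
    and PN: "P \<subseteq> normalizer G Q1" and QN: "Q \<subseteq> normalizer G (Q1 <#> P)"
  shows "subgroup (Q <#> P) G"
proof -
  have Q1P: "subgroup (Q1 <#> P) G"
    using subgroup_set_mult_normalizer(1)[OF Q1 P PN] .
  have "Q <#> P = (Q <#> Q1) <#> P"
    using set_mult_subgroup_idem[OF Q subgroup_incl[OF Q1 Q Q1Q]] by simp
  also have "\<dots> = Q <#> (Q1 <#> P)"
    using set_mult_assoc Q Q1 P subgroup.subset by metis
  also have "\<dots> = (Q1 <#> P) <#> Q"
    using subgroup_set_mult_normalizer(2)[OF Q1P Q QN] by simp
  finally show ?thesis
    using subgroup_set_mult_normalizer(1)[OF Q1P Q QN] by simp
qed

section \<open>Commutator subgroups and centralizers\<close>

lemma subgroup_commutator_subgroup: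
  assumes "A \<subseteq> carrier G" "B \<subseteq> carrier G"
  shows "subgroup (commutator_subgroup G A B) G"
  unfolding commutator_subgroup_def by (rule generate_is_subgroup) (use assms in blast)

lemma commutator_subgroup_subset:
  assumes H: "subgroup H G" and P: "P \<subseteq> normalizer G H"
  shows "commutator_subgroup G H P \<subseteq> H"
  unfolding commutator_subgroup_def
proof (rule generate_subgroup_incl[OF _ H], clarify)
  interpret H: subgroup H G by fact
  fix a b assume a: "a \<in> H" and b: "b \<in> P"
  then have b_carrier: "b \<in> carrier G"
    using P normalizer_subset_carrier[OF H.subset] by blast
  have "b \<otimes> inv a \<otimes> inv b \<in> H"
    using normalizer_conj_closed[OF H.subset] P a b by blast
  then have "a \<otimes> (b \<otimes> inv a \<otimes> inv b) \<in> H"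
    using a by blast
  then show "a \<otimes> b \<otimes> inv a \<otimes> inv b \<in> H"
    using a b_carrier by (simp add: m_assoc)
qed

lemma conj_commutator_subgroup_closed:
  assumes A: "A \<subseteq> carrier G" and B: "B \<subseteq> carrier G"
    and g: "g \<in> normalizer G A" "g \<in> normalizer G B" and x: "x \<in> commutator_subgroup G A B"
  shows "g \<otimes> x \<otimes> inv g \<in> commutator_subgroup G A B"
proof -
  define c where "c x = g \<otimes> x \<otimes> inv g" for x
  interpret c: group_hom G G c
    unfolding c_def using conj_group_hom normalizer_subset_carrier[OF A] g(1) by blast
  let ?S = "{a \<otimes> b \<otimes> inv a \<otimes> inv b | a b. a \<in> A \<and> b \<in> B}"
  have S: "?S \<subseteq> carrier G"
    using A B by blast
  have "c ` ?S \<subseteq> ?S"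
  proof (rule image_subsetI)
    fix s assume "s \<in> ?S"
    then obtain a b where ab: "a \<in> A" "b \<in> B" and s: "s = a \<otimes> b \<otimes> inv a \<otimes> inv b"
      by blast
    then have "c a \<in> A" "c b \<in> B"
      unfolding c_def using normalizer_conj_closed A B g by auto
    moreover have "c (a \<otimes> b \<otimes> inv a \<otimes> inv b) = c a \<otimes> c b \<otimes> inv (c a) \<otimes> inv (c b)"
      using ab A B by (auto simp: subsetD)
    ultimately show "c s \<in> ?S"
      unfolding s by blast
  qed
  then have "generate G (c ` ?S) \<subseteq> generate G ?S"
    by (rule mono_generate)
  then have "c ` commutator_subgroup G A B \<subseteq> commutator_subgroup G A B"
    unfolding commutator_subgroup_def c.generate_img[OF S] .
  then show ?thesis
    using x unfolding c_def by blast
qed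

lemma normalizer_commutator_subgroup:
  assumes A: "A \<subseteq> carrier G" and B: "B \<subseteq> carrier G"
  shows "normalizer G A \<inter> normalizer G B \<subseteq> normalizer G (commutator_subgroup G A B)"
proof
  fix g assume g: "g \<in> normalizer G A \<inter> normalizer G B"
  then have inv_g: "inv g \<in> normalizer G A \<inter> normalizer G B"
    using subgroup.m_inv_closed[OF normalizer_imp_subgroup[OF A]]
      subgroup.m_inv_closed[OF normalizer_imp_subgroup[OF B]] by blast
  have g_carrier: "g \<in> carrier G"
    using g normalizer_subset_carrier[OF A] by blast
  have K: "commutator_subgroup G A B \<subseteq> carrier G"
    using subgroup.subset[OF subgroup_commutator_subgroup[OF A B]] .
  show "g \<in> normalizer G (commutator_subgroup G A B)"
  proof (rule normalizerI[OF K g_carrier])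
    fix h assume h: "h \<in> commutator_subgroup G A B"
    show "g \<otimes> h \<otimes> inv g \<in> commutator_subgroup G A B"
      using conj_commutator_subgroup_closed[OF A B _ _ h] g by blast
    have "inv g \<otimes> h \<otimes> inv (inv g) \<in> commutator_subgroup G A B"
      using conj_commutator_subgroup_closed[OF A B _ _ h] inv_g by blast
    then show "inv g \<otimes> h \<otimes> g \<in> commutator_subgroup G A B"
      using g_carrier by simp
  qed
qed

lemma centralizer_inI:
  assumes "z \<in> H" "H \<subseteq> carrier G" "P \<subseteq> carrier G" and fixed: "\<And>a. a \<in> P \<Longrightarrow> a \<otimes> z \<otimes> inv a = z"
  shows "z \<in> centralizer_in G H P"
proof -
  have "z \<otimes> a = a \<otimes> z" if a: "a \<in> P" for a
  proof -
    have "z \<otimes> a = (a \<otimes> z \<otimes> inv a) \<otimes> a"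
      using fixed[OF a] by simp
    also have "\<dots> = a \<otimes> z"
      using a assms(1-3) by (simp add: m_assoc subsetD)
    finally show ?thesis .
  qed
  then show ?thesis
    unfolding centralizer_in_def using assms(1) by blast
qed

lemma centralizer_in_subset_normalizer:
  assumes "H \<subseteq> carrier G" "S \<subseteq> carrier G"
  shows "centralizer_in G H S \<subseteq> normalizer G S"
proof
  fix c assume "c \<in> centralizer_in G H S"
  then have c: "c \<in> carrier G" and comm: "\<And>s. s \<in> S \<Longrightarrow> c \<otimes> s = s \<otimes> c"
    using assms(1) unfolding centralizer_in_def by auto
  have "c \<otimes> s \<otimes> inv c = s" "inv c \<otimes> s \<otimes> c = s" if "s \<in> S" for s
  proof -
    have s: "s \<in> carrier G"
      using that assms(2) by blast
    have "c \<otimes> s \<otimes> inv c = s \<otimes> c \<otimes> inv c"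
      using comm[OF that] by simp
    then show "c \<otimes> s \<otimes> inv c = s"
      using c s by (simp add: m_assoc)
    have "inv c \<otimes> s \<otimes> c = inv c \<otimes> (c \<otimes> s)"
      using comm[OF that] c s by (simp add: m_assoc)
    then show "inv c \<otimes> s \<otimes> c = s"
      using c s by simp
  qed
  then show "c \<in> normalizer G S"
    using normalizerI[OF assms(2) c] by simp
qed

lemma normalizer_Int_subset_centralizer_in:
  assumes H: "subgroup H G" and P: "subgroup P G" and PH: "P \<subseteq> normalizer G H"
    and HP: "H \<inter> P = {\<one>}"
  shows "H \<inter> normalizer G P \<subseteq> centralizer_in G H P"
proof
  interpret H: subgroup H G by fact
  interpret P: subgroup P G by fact
  fix x assume x: "x \<in> H \<inter> normalizer G P"
  have "x \<otimes> a = a \<otimes> x" if a: "a \<in> P" for a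
  proof -
    have "x \<otimes> a \<otimes> inv x \<in> P"
      using normalizer_conj_closed[OF P.subset] x a by blast
    then have in_P: "x \<otimes> a \<otimes> inv x \<otimes> inv a \<in> P"
      using a by blast
    have "a \<otimes> inv x \<otimes> inv a \<in> H"
      using normalizer_conj_closed[OF H.subset] PH x a by blast
    then have "x \<otimes> (a \<otimes> inv x \<otimes> inv a) \<in> H"
      using x by blast
    then have "x \<otimes> a \<otimes> inv x \<otimes> inv a \<in> H"
      using x a by (simp add: m_assoc)
    then have "x \<otimes> a \<otimes> inv x \<otimes> inv a = \<one>"
      using in_P HP by blast
    moreover have "x \<otimes> a = (x \<otimes> a \<otimes> inv x \<otimes> inv a) \<otimes> (a \<otimes> x)"
      using x a by (simp add: m_assoc)
    ultimately show ?thesis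
      using x a by simp
  qed
  then show "x \<in> centralizer_in G H P"
    using x unfolding centralizer_in_def by blast
qed

lemma Int_normalizer_eq_centralizer_in:
  assumes K: "subgroup K G" and P: "subgroup P G" and PK: "P \<subseteq> normalizer G K"
    and KQ: "K \<subseteq> Q" and QP: "Q \<inter> P = {\<one>}"
  shows "K \<inter> (Q \<inter> normalizer G P) = centralizer_in G K P"
proof
  have "K \<inter> P = {\<one>}"
    using KQ QP subgroup.one_closed[OF K] subgroup.one_closed[OF P] by blast
  then show "K \<inter> (Q \<inter> normalizer G P) \<subseteq> centralizer_in G K P"
    using normalizer_Int_subset_centralizer_in[OF K P PK] by blast
  show "centralizer_in G K P \<subseteq> K \<inter> (Q \<inter> normalizer G P)"
    using centralizer_in_subset_normalizer[OF subgroup.subset[OF K] subgroup.subset[OF P]] KQ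
    unfolding centralizer_in_def by blast
qed

lemma commutator_subgroup_subset_of_decomposition:
  assumes H_carrier: "H \<subseteq> carrier G" and L: "L \<subseteq> carrier G" and P: "P \<subseteq> carrier G"
    and H: "H \<subseteq> L <#> centralizer_in G H P"
  shows "commutator_subgroup G H P \<subseteq> commutator_subgroup G L P"
  unfolding commutator_subgroup_def
proof (rule mono_generate, clarify)
  fix y a assume y: "y \<in> H" and a: "a \<in> P"
  then obtain k c where k: "k \<in> L" and c: "c \<in> centralizer_in G H P" and y_eq: "y = k \<otimes> c"
    using H unfolding set_mult_def by blast
  have c_carrier: "c \<in> carrier G" and ca: "c \<otimes> a = a \<otimes> c"
    using c a H_carrier unfolding centralizer_in_def by auto
  have k_carrier: "k \<in> carrier G" and a_carrier: "a \<in> carrier G"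
    using k a L P by auto
  have "y \<otimes> a \<otimes> inv y \<otimes> inv a = k \<otimes> (c \<otimes> a) \<otimes> inv c \<otimes> inv k \<otimes> inv a"
    using y_eq k_carrier c_carrier a_carrier by (simp add: m_assoc inv_mult_group)
  also have "\<dots> = k \<otimes> a \<otimes> inv k \<otimes> inv a"
    unfolding ca using k_carrier c_carrier a_carrier by (simp add: m_assoc)
  finally show "\<exists>k' a'. y \<otimes> a \<otimes> inv y \<otimes> inv a = k' \<otimes> a' \<otimes> inv k' \<otimes> inv a' \<and> k' \<in> L \<and> a' \<in> P"
    using k a by blast
qed

end

section \<open>Fixed points of actions of \<open>p\<close>-groups\<close>

lemma (in group_action) orbit_eq_singleton_iff:
  assumes "x \<in> E"
  shows "orbit G \<phi> x = {x} \<longleftrightarrow> (\<forall>g\<in>carrier G. \<phi> g x = x)"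
  using orbit_refl[OF assms] unfolding orbit_def by auto

lemma (in group_action) prime_dvd_card_orbit:
  assumes order: "order G = p ^ n" and p: "Factorial_Ring.prime p" and x: "x \<in> E"
    and nontrivial: "card (orbit G \<phi> x) \<noteq> 1"
  shows "p dvd card (orbit G \<phi> x)"
proof -
  have "card (orbit G \<phi> x) * card (stabilizer G \<phi> x) = p ^ n"
    using orbit_stabilizer_theorem[OF x] order by simp
  then have "card (orbit G \<phi> x) dvd p ^ n"
    by (metis dvd_triv_left)
  then obtain k where "card (orbit G \<phi> x) = p ^ k"
    using divides_primepow_nat[OF p] by blast
  then show ?thesis
    using nontrivial by (cases k) auto
qed

lemma (in group_action) singleton_orbits:
  "{C \<in> orbits G E \<phi>. card C = 1} = (\<lambda>x. {x}) ` {x \<in> E. \<forall>g\<in>carrier G. \<phi> g x = x}"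
proof
  show "{C \<in> orbits G E \<phi>. card C = 1} \<subseteq> (\<lambda>x. {x}) ` {x \<in> E. \<forall>g\<in>carrier G. \<phi> g x = x}"
  proof clarify
    fix C assume C: "C \<in> orbits G E \<phi>" "card C = 1"
    then obtain x where x: "x \<in> E" "C = orbit G \<phi> x"
      unfolding orbits_def by blast
    obtain y where "C = {y}"
      using C(2) by (rule card_1_singletonE)
    then have "C = {x}"
      using orbit_refl[OF x(1)] x(2) by simp
    moreover have "\<forall>g\<in>carrier G. \<phi> g x = x"
      using orbit_eq_singleton_iff[OF x(1)] x(2) \<open>C = {x}\<close> by simp
    ultimately show "C \<in> (\<lambda>x. {x}) ` {x \<in> E. \<forall>g\<in>carrier G. \<phi> g x = x}"
      using x(1) by blast
  qed
  show "(\<lambda>x. {x}) ` {x \<in> E. \<forall>g\<in>carrier G. \<phi> g x = x} \<subseteq> {C \<in> orbits G E \<phi>. card C = 1}"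
  proof clarify
    fix x assume x: "x \<in> E" "\<forall>g\<in>carrier G. \<phi> g x = x"
    then have "orbit G \<phi> x = {x}"
      using orbit_eq_singleton_iff[OF x(1)] by simp
    then have "{x} \<in> orbits G E \<phi>"
      unfolding orbits_def using x(1) by blast
    then show "{x} \<in> orbits G E \<phi> \<and> card {x} = 1"
      by simp
  qed
qed

lemma (in group_action) fixed_points_card_cong:
  assumes fin: "finite E" and order: "order G = p ^ n" and p: "Factorial_Ring.prime p"
  shows "card E mod p = card {x \<in> E. \<forall>g\<in>carrier G. \<phi> g x = x} mod p"
proof -
  define Orbs where "Orbs = orbits G E \<phi>"
  define Triv where "Triv = {C \<in> Orbs. card C = 1}"
  have "finite Orbs"
    using fin unfolding Orbs_def orbits_def by simp
  have "(\<Sum>C\<in>Orbs. \<Sum>x\<in>C. 1) = (\<Sum>x\<in>E. 1::nat)"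
    unfolding Orbs_def by (rule disjoint_sum[OF fin])
  then have "card E = (\<Sum>C\<in>Orbs. card C)"
    by simp
  also have "\<dots> = (\<Sum>C\<in>Orbs - Triv. card C) + (\<Sum>C\<in>Triv. card C)"
    by (rule sum.subset_diff) (auto simp: Triv_def \<open>finite Orbs\<close>)
  also have "(\<Sum>C\<in>Triv. card C) = card Triv"
    unfolding Triv_def by simp
  finally have card_E: "card E = (\<Sum>C\<in>Orbs - Triv. card C) + card Triv" .
  have "p dvd (\<Sum>C\<in>Orbs - Triv. card C)"
  proof (rule dvd_sum)
    fix C assume C: "C \<in> Orbs - Triv"
    then obtain x where "x \<in> E" "C = orbit G \<phi> x"
      unfolding Orbs_def orbits_def by blast
    then show "p dvd card C"
      using prime_dvd_card_orbit[OF order p] C unfolding Triv_def by blast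
  qed
  then obtain k where k: "(\<Sum>C\<in>Orbs - Triv. card C) = p * k"
    by (rule dvdE)
  have "card Triv = card {x \<in> E. \<forall>g\<in>carrier G. \<phi> g x = x}"
    unfolding Triv_def Orbs_def singleton_orbits by (simp add: card_image)
  then show ?thesis
    unfolding card_E k by simp
qed

context group begin

lemma group_action_of_subgroup:
  assumes B: "subgroup B G"
    and closed: "\<And>b x. b \<in> B \<Longrightarrow> x \<in> S \<Longrightarrow> f b x \<in> S"
    and one: "\<And>x. x \<in> S \<Longrightarrow> f \<one> x = x"
    and mult: "\<And>a b x. a \<in> B \<Longrightarrow> b \<in> B \<Longrightarrow> x \<in> S \<Longrightarrow> f (a \<otimes> b) x = f a (f b x)"
  shows "group_action (G\<lparr>carrier := B\<rparr>) S (\<lambda>b. \<lambda>x\<in>S. f b x)"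
proof -
  interpret B: subgroup B G by fact
  have bij: "(\<lambda>x\<in>S. f b x) \<in> Bij S" if b: "b \<in> B" for b
  proof -
    have "f (inv b) (f b x) = x" "f b (f (inv b) x) = x" if "x \<in> S" for x
      using mult[of "inv b" b x] mult[of b "inv b" x] one b that by auto
    then have "bij_betw (f b) S S"
      by (intro bij_betwI[where g = "f (inv b)"]) (use b closed in auto)
    then show ?thesis
      unfolding Bij_def by (simp add: bij_betw_def inj_on_def)
  qed
  show ?thesis
    unfolding group_action_def
  proof (rule group_hom.intro[OF subgroup_imp_group[OF B] group_BijGroup], rule group_hom_axioms.intro, rule homI)
    show "(\<lambda>x\<in>S. f b x) \<in> carrier (BijGroup S)" if "b \<in> carrier (G\<lparr>carrier := B\<rparr>)" for b
      using bij that by (simp add: BijGroup_def)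
    show "(\<lambda>x\<in>S. f (a \<otimes>\<^bsub>G\<lparr>carrier := B\<rparr>\<^esub> b) x) = (\<lambda>x\<in>S. f a x) \<otimes>\<^bsub>BijGroup S\<^esub> (\<lambda>x\<in>S. f b x)"
      if "a \<in> carrier (G\<lparr>carrier := B\<rparr>)" "b \<in> carrier (G\<lparr>carrier := B\<rparr>)" for a b
      using that bij by (auto simp: BijGroup_def compose_def mult closed fun_eq_iff)
  qed
qed

lemma p_subgroup_action_fixed_points_cong:
  assumes B: "subgroup B G" and card_B: "card B = p ^ n" and p: "Factorial_Ring.prime p" and S: "finite S"
    and closed: "\<And>b x. b \<in> B \<Longrightarrow> x \<in> S \<Longrightarrow> f b x \<in> S"
    and one: "\<And>x. x \<in> S \<Longrightarrow> f \<one> x = x"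
    and mult: "\<And>a b x. a \<in> B \<Longrightarrow> b \<in> B \<Longrightarrow> x \<in> S \<Longrightarrow> f (a \<otimes> b) x = f a (f b x)"
  shows "card S mod p = card {x \<in> S. \<forall>b\<in>B. f b x = x} mod p"
proof -
  interpret group_action "G\<lparr>carrier := B\<rparr>" S "\<lambda>b. \<lambda>x\<in>S. f b x"
    using group_action_of_subgroup[OF B closed one mult] .
  have "card S mod p = card {x \<in> S. \<forall>b\<in>B. (\<lambda>x\<in>S. f b x) x = x} mod p"
    using fixed_points_card_cong[OF S _ p] card_B by (simp add: order_def)
  moreover have "{x \<in> S. \<forall>b\<in>B. (\<lambda>x\<in>S. f b x) x = x} = {x \<in> S. \<forall>b\<in>B. f b x = x}"
    by auto
  ultimately show ?thesis
    by simp
qed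

lemma p_subgroup_action_fixed_point:
  assumes B: "subgroup B G" and card_B: "card B = p ^ n" and p: "Factorial_Ring.prime p" and S: "finite S"
    and closed: "\<And>b x. b \<in> B \<Longrightarrow> x \<in> S \<Longrightarrow> f b x \<in> S"
    and one: "\<And>x. x \<in> S \<Longrightarrow> f \<one> x = x"
    and mult: "\<And>a b x. a \<in> B \<Longrightarrow> b \<in> B \<Longrightarrow> x \<in> S \<Longrightarrow> f (a \<otimes> b) x = f a (f b x)"
    and not_dvd: "\<not> p dvd card S"
  obtains x where "x \<in> S" "\<And>b. b \<in> B \<Longrightarrow> f b x = x"
proof -
  have "card {x \<in> S. \<forall>b\<in>B. f b x = x} mod p \<noteq> 0"
    using p_subgroup_action_fixed_points_cong[OF B card_B p S closed one mult] not_dvd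
    by (simp add: dvd_eq_mod_eq_0)
  then have "{x \<in> S. \<forall>b\<in>B. f b x = x} \<noteq> {}"
    by (metis card.empty mod_0)
  then show ?thesis
    using that by blast
qed

lemma card_rcosets_in_subgroup:
  assumes R: "subgroup R G" and H: "subgroup H G" and RH: "R \<subseteq> H"
  shows "card ((\<lambda>h. R #> h) ` H) * card R = card H"
proof -
  interpret H: group "G\<lparr>carrier := H\<rparr>"
    using subgroup_imp_group[OF H] .
  have "rcosets\<^bsub>G\<lparr>carrier := H\<rparr>\<^esub> R = (\<lambda>h. R #> h) ` H"
    unfolding RCOSETS_def by auto
  then show ?thesis
    using H.lagrange[OF subgroup_incl[OF R H RH]] by (simp add: order_def)
qed

lemma subgroup_ball_inv_iff:
  assumes B: "subgroup B G"
  shows "(\<forall>b\<in>B. \<Phi> (inv b)) \<longleftrightarrow> (\<forall>b\<in>B. \<Phi> b)"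
proof
  assume inv_b: "\<forall>b\<in>B. \<Phi> (inv b)"
  show "\<forall>b\<in>B. \<Phi> b"
  proof
    fix b assume b: "b \<in> B"
    then have "\<Phi> (inv (inv b))"
      using inv_b subgroup.m_inv_closed[OF B b] by blast
    then show "\<Phi> b"
      using b subgroup.mem_carrier[OF B] by simp
  qed
qed (use subgroup.m_inv_closed[OF B] in blast)

lemma rcosets_fixed_points_cong:
  assumes R: "subgroup R G" and H: "subgroup H G" and RH: "R \<subseteq> H" and fin: "finite H"
    and B: "subgroup B G" and BH: "B \<subseteq> H" and card_B: "card B = p ^ n" and p: "Factorial_Ring.prime p"
  shows "card ((\<lambda>h. R #> h) ` H) mod p = card {C \<in> (\<lambda>h. R #> h) ` H. \<forall>b\<in>B. C #> b = C} mod p"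
proof -
  interpret R: subgroup R G by fact
  interpret H: subgroup H G by fact
  interpret B: subgroup B G by fact
  have coset: "C \<subseteq> carrier G" if C: "C \<in> (\<lambda>h. R #> h) ` H" for C
  proof -
    obtain h where "h \<in> H" "C = R #> h"
      using C by (rule imageE)
    then show ?thesis
      using r_coset_subset_G[OF R.subset] by simp
  qed
  have "card ((\<lambda>h. R #> h) ` H) mod p = card {C \<in> (\<lambda>h. R #> h) ` H. \<forall>b\<in>B. C #> inv b = C} mod p"
  proof (rule p_subgroup_action_fixed_points_cong[OF B card_B p])
    show "finite ((\<lambda>h. R #> h) ` H)"
      using fin by simp
  next
    fix b C assume b: "b \<in> B" and C: "C \<in> (\<lambda>h. R #> h) ` H"
    obtain h where h: "h \<in> H" "C = R #> h"
      using C by (rule imageE)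
    have "h \<in> carrier G" "inv b \<in> carrier G"
      using h(1) b by auto
    then have "C #> inv b = R #> (h \<otimes> inv b)"
      unfolding h(2) using coset_mult_assoc[OF R.subset] by simp
    moreover have "h \<otimes> inv b \<in> H"
      using h(1) b BH by (simp add: subsetD)
    ultimately show "C #> inv b \<in> (\<lambda>h. R #> h) ` H"
      by (rule image_eqI)
  next
    fix C assume "C \<in> (\<lambda>h. R #> h) ` H"
    then show "C #> inv \<one> = C"
      using coset by simp
  next
    fix a b C assume "a \<in> B" "b \<in> B" "C \<in> (\<lambda>h. R #> h) ` H"
    then show "C #> inv (a \<otimes> b) = C #> inv b #> inv a"
      using coset_mult_assoc[OF coset] by (simp add: inv_mult_group)
  qed
  moreover have "(\<forall>b\<in>B. C #> inv b = C) \<longleftrightarrow> (\<forall>b\<in>B. C #> b = C)" for C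
    using subgroup_ball_inv_iff[OF B, of "\<lambda>b. C #> b = C"] .
  ultimately show ?thesis
    by simp
qed

lemma rcos_fixed_imp_conj_mem:
  assumes R: "subgroup R G" and g: "g \<in> carrier G" and b: "b \<in> carrier G"
    and fixed: "R #> g #> b = R #> g"
  shows "g \<otimes> b \<otimes> inv g \<in> R"
proof -
  have "R #> (g \<otimes> b) = R #> g"
    using fixed coset_mult_assoc[OF subgroup.subset[OF R] g b] by simp
  moreover have "g \<otimes> b \<in> R #> (g \<otimes> b)"
    using rcos_self[OF _ R] g b by simp
  ultimately have "g \<otimes> b \<in> R #> g"
    by simp
  then show ?thesis
    using subgroup.rcos_module_imp[OF R is_group g] by blast
qed

section \<open>Subgroups of \<open>p\<close>-groups\<close>

lemma prime_dvd_card_fixed_rcosets: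
  assumes K: "subgroup K G" and fin: "finite K" and card_K: "card K = p ^ m"
    and p: "Factorial_Ring.prime p" and M: "subgroup M G" and MK: "M \<subset> K"
  shows "p dvd card {C \<in> (\<lambda>h. M #> h) ` K. \<forall>b\<in>M. C #> b = C}"
proof -
  obtain i where card_M: "card M = p ^ i"
    using card_subgroup_dvd[OF M K] MK card_K divides_primepow_nat[OF p] by auto
  have "p ^ i < p ^ m"
    using psubset_card_mono[OF fin MK] card_M card_K by simp
  then have "i < m"
    by (rule power_less_imp_less_exp[OF prime_gt_1_nat[OF p]])
  have "card ((\<lambda>h. M #> h) ` K) * p ^ i = p ^ (m - i) * p ^ i"
    using card_rcosets_in_subgroup[OF M K] MK card_M card_K \<open>i < m\<close>
    by (simp flip: power_add)
  then have "card ((\<lambda>h. M #> h) ` K) = p ^ (m - i)"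
    using p by (simp add: prime_gt_0_nat)
  then have "card ((\<lambda>h. M #> h) ` K) mod p = 0"
    using \<open>i < m\<close> by simp
  then show ?thesis
    using rcosets_fixed_points_cong[OF M K _ fin M _ card_M p] MK by auto
qed

lemma fixed_rcos_imp_normalizer:
  assumes M: "subgroup M G" and fin: "finite M" and g: "g \<in> carrier G"
    and fixed: "\<And>b. b \<in> M \<Longrightarrow> M #> g #> b = M #> g"
  shows "g \<in> normalizer G M"
proof (rule finite_normalizerI[OF fin subgroup.subset[OF M] g])
  fix b assume "b \<in> M"
  then show "g \<otimes> b \<otimes> inv g \<in> M"
    using rcos_fixed_imp_conj_mem[OF M g _ fixed] subgroup.subset[OF M] by blast
qed

lemma p_group_normalizer_grows:
  assumes K: "subgroup K G" and fin: "finite K" and card_K: "card K = p ^ m"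
    and p: "Factorial_Ring.prime p" and M: "subgroup M G" and MK: "M \<subset> K"
  shows "M \<subset> K \<inter> normalizer G M"
proof -
  let ?F = "{C \<in> (\<lambda>h. M #> h) ` K. \<forall>b\<in>M. C #> b = C}"
  have "M \<in> ?F"
    using subgroup.subset[OF M] subgroup.one_closed[OF K] subgroup.rcos_const[OF M is_group]
    by (auto intro!: image_eqI[where x = \<one>])
  moreover have "finite ?F"
    using fin by simp
  ultimately have "p \<le> card ?F"
    using card_gt_0_iff[of ?F] dvd_imp_le prime_dvd_card_fixed_rcosets[OF K fin card_K p M MK] by blast
  then have "card {M} < card ?F"
    using prime_ge_2_nat[OF p] by simp
  then have "\<not> ?F \<subseteq> {M}"
    using card_mono[of "{M}" ?F] by auto
  then obtain g where g: "g \<in> K" "M #> g \<noteq> M" and fixed: "\<And>b. b \<in> M \<Longrightarrow> M #> g #> b = M #> g"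
    by blast
  have "g \<notin> M"
    using g(2) subgroup.rcos_const[OF M is_group] by blast
  moreover have "g \<in> normalizer G M"
    using fixed_rcos_imp_normalizer[OF M _ _ fixed] g(1) fin MK subgroup.subset[OF K] finite_subset by blast
  moreover have "M \<subseteq> K \<inter> normalizer G M"
    using MK subgroup_subset_normalizer[OF M] by blast
  ultimately show ?thesis
    using g(1) by blast
qed

lemma maximal_subgroup_of_p_group_normal:
  assumes K: "subgroup K G" and fin: "finite K" and card_K: "card K = p ^ m"
    and p: "Factorial_Ring.prime p" and max: "maximal_subgroup_of G M K"
  shows "K \<subseteq> normalizer G M"
proof -
  have M: "subgroup M G" and MK: "M \<subset> K"
    and maximal: "\<And>L. subgroup L G \<Longrightarrow> M \<subseteq> L \<Longrightarrow> L \<subseteq> K \<Longrightarrow> L = M \<or> L = K"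
    using max unfolding maximal_subgroup_of_def by auto
  have "subgroup (K \<inter> normalizer G M) G"
    using subgroups_Inter_pair[OF K normalizer_imp_subgroup[OF subgroup.subset[OF M]]] .
  moreover have "M \<subset> K \<inter> normalizer G M"
    using p_group_normalizer_grows[OF K fin card_K p M MK] .
  ultimately have "K \<inter> normalizer G M = K"
    using maximal by blast
  then show ?thesis
    by blast
qed

lemma subgroup_commuting_modulo:
  assumes K: "subgroup K G" and M: "subgroup M G" and KN: "K \<subseteq> normalizer G M" and x: "x \<in> K"
  shows "subgroup {y \<in> K. x \<otimes> y \<otimes> inv x \<otimes> inv y \<in> M} G"
proof -
  have K_carrier: "K \<subseteq> carrier G" and x_carrier: "x \<in> carrier G"
    using K x subgroup.subset by auto
  have conj: "k \<otimes> u \<otimes> inv k \<in> M" if "k \<in> K" "u \<in> M" for k u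
    using normalizer_conj_closed[OF subgroup.subset[OF M]] KN that by blast
  show ?thesis
  proof
    show "{y \<in> K. x \<otimes> y \<otimes> inv x \<otimes> inv y \<in> M} \<subseteq> carrier G"
      using K_carrier by blast
    show "\<one> \<in> {y \<in> K. x \<otimes> y \<otimes> inv x \<otimes> inv y \<in> M}"
      using x_carrier subgroup.one_closed[OF K] subgroup.one_closed[OF M] by simp
  next
    fix y z assume "y \<in> {y \<in> K. x \<otimes> y \<otimes> inv x \<otimes> inv y \<in> M}" "z \<in> {y \<in> K. x \<otimes> y \<otimes> inv x \<otimes> inv y \<in> M}"
    then have y: "y \<in> K" "x \<otimes> y \<otimes> inv x \<otimes> inv y \<in> M" and z: "z \<in> K" "x \<otimes> z \<otimes> inv x \<otimes> inv z \<in> M"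
      by auto
    have "x \<otimes> (y \<otimes> z) \<otimes> inv x \<otimes> inv (y \<otimes> z)
        = (x \<otimes> y \<otimes> inv x \<otimes> inv y) \<otimes> (y \<otimes> (x \<otimes> z \<otimes> inv x \<otimes> inv z) \<otimes> inv y)"
      using x y(1) z(1) K_carrier by (simp add: m_assoc inv_mult_group subsetD)
    also have "\<dots> \<in> M"
      using subgroup.m_closed[OF M y(2) conj[OF y(1) z(2)]] .
    finally show "y \<otimes> z \<in> {y \<in> K. x \<otimes> y \<otimes> inv x \<otimes> inv y \<in> M}"
      using subgroup.m_closed[OF K y(1) z(1)] by blast
  next
    fix y assume "y \<in> {y \<in> K. x \<otimes> y \<otimes> inv x \<otimes> inv y \<in> M}"
    then have y: "y \<in> K" "x \<otimes> y \<otimes> inv x \<otimes> inv y \<in> M"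
      by auto
    have "x \<otimes> inv y \<otimes> inv x \<otimes> inv (inv y) = inv y \<otimes> inv (x \<otimes> y \<otimes> inv x \<otimes> inv y) \<otimes> inv (inv y)"
      using x y(1) K_carrier by (simp add: m_assoc inv_mult_group subsetD)
    also have "\<dots> \<in> M"
      using conj[OF subgroup.m_inv_closed[OF K y(1)] subgroup.m_inv_closed[OF M y(2)]] .
    finally show "inv y \<in> {y \<in> K. x \<otimes> y \<otimes> inv x \<otimes> inv y \<in> M}"
      using subgroup.m_inv_closed[OF K y(1)] by blast
  qed
qed

lemma derived_subset_maximal_normal_subgroup:
  assumes K: "subgroup K G" and max: "maximal_subgroup_of G M K" and KN: "K \<subseteq> normalizer G M"
  shows "derived G K \<subseteq> M"
proof -
  have M: "subgroup M G" and MK: "M \<subset> K"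
    and maximal: "\<And>L. subgroup L G \<Longrightarrow> M \<subseteq> L \<Longrightarrow> L \<subseteq> K \<Longrightarrow> L = M \<or> L = K"
    using max unfolding maximal_subgroup_of_def by auto
  have K_carrier: "K \<subseteq> carrier G"
    using K subgroup.subset by auto
  have conj: "k \<otimes> u \<otimes> inv k \<in> M" if "k \<in> K" "u \<in> M" for k u
    using normalizer_conj_closed[OF subgroup.subset[OF M]] KN that by blast
  have "x \<otimes> y \<otimes> inv x \<otimes> inv y \<in> M" if x: "x \<in> K" and y: "y \<in> K" for x y
  proof (cases "x \<in> M")
    case True
    have "x \<otimes> (y \<otimes> inv x \<otimes> inv y) \<in> M"
      using subgroup.m_closed[OF M True conj[OF y subgroup.m_inv_closed[OF M True]]] .
    then show ?thesis
      using x y K_carrier by (simp add: m_assoc subsetD)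
  next
    case False
    define T where "T = {y \<in> K. x \<otimes> y \<otimes> inv x \<otimes> inv y \<in> M}"
    have "M \<subseteq> T"
    proof
      fix u assume u: "u \<in> M"
      have "x \<otimes> u \<otimes> inv x \<otimes> inv u \<in> M"
        using subgroup.m_closed[OF M conj[OF x u] subgroup.m_inv_closed[OF M u]] .
      then show "u \<in> T"
        unfolding T_def using u MK by blast
    qed
    moreover have "x \<in> T"
      unfolding T_def using x K_carrier subgroup.one_closed[OF M] by (simp add: m_assoc subsetD)
    ultimately have "T = K"
      using maximal subgroup_commuting_modulo[OF K M KN x] False unfolding T_def by blast
    then show ?thesis
      using y unfolding T_def by blast
  qed
  then show ?thesis
    unfolding derived_def by (intro generate_subgroup_incl[OF _ M]) blast
qed

section \<open>The norm map into an abelian quotient\<close>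

lemma pow_coprime_order_eq_one:
  assumes x: "x \<in> carrier G" and pow: "x [^] k = \<one>" and cop: "coprime k (order G)"
  shows "x = \<one>"
proof -
  have "ord x dvd k"
    using pow_eq_id[OF x] pow by simp
  moreover have "ord x dvd order G"
    using ord_dvd_group_order[OF x] .
  ultimately have "ord x = 1"
    using coprime_common_divisor_nat[OF cop] by blast
  then show ?thesis
    using ord_eq_1[OF x] by simp
qed

end

lemma (in normal) comm_group_FactGroup_of_derived_subset:
  assumes "derived G (carrier G) \<subseteq> H"
  shows "comm_group (G Mod H)"
proof (rule group.group_comm_groupI[OF factorgroup_is_group])
  fix U V assume "U \<in> carrier (G Mod H)" "V \<in> carrier (G Mod H)"
  then obtain x y where x: "x \<in> carrier G" "U = H #> x" and y: "y \<in> carrier G" "V = H #> y"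
    unfolding FactGroup_def RCOSETS_def by auto
  have "x \<otimes> y \<otimes> inv x \<otimes> inv y \<in> derived G (carrier G)"
    unfolding derived_def using x y by (blast intro: generate.incl)
  then have "(x \<otimes> y) \<otimes> inv (y \<otimes> x) \<in> H"
    using assms x y by (auto simp: m_assoc inv_mult_group)
  then have "x \<otimes> y \<in> H #> (y \<otimes> x)"
    using rcos_module_rev[OF is_group] x y by simp
  then have "H #> (y \<otimes> x) = H #> (x \<otimes> y)"
    using repr_independence[OF _ _ subgroup_axioms] x y by simp
  then show "U \<otimes>\<^bsub>G Mod H\<^esub> V = V \<otimes>\<^bsub>G Mod H\<^esub> U"
    using x y by (simp add: rcos_sum)
qed

text \<open>
  For \<open>N \<lhd> K\<close> with abelian quotient and a group \<open>P\<close> normalising \<open>K\<close>, the norm map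
  \<open>x \<mapsto> \<Prod>a\<in>P. N a x a\<inverse>\<close> from \<open>K\<close> to \<open>K/N\<close> is a homomorphism that is constant on
  \<open>P\<close>-orbits, so it kills \<open>[K, P]\<close>, while on \<open>C\<^sub>K(P)\<close> it is the \<open>|P|\<close>-th power map.
\<close>
locale quotient_norm = group G for G (structure) +
  fixes K N P
  assumes subgroup_K: "subgroup K G" and normal_N: "N \<lhd> G\<lparr>carrier := K\<rparr>"
    and derived_subset: "derived G K \<subseteq> N"
    and subgroup_P: "subgroup P G" and finite_P: "finite P" and P_normalizes: "P \<subseteq> normalizer G K"
begin

abbreviation quot where "quot \<equiv> G\<lparr>carrier := K\<rparr> Mod N"

text \<open>Keep the operations of \<open>quot\<close> abstract, so that its group laws apply.\<close>
declare one_FactGroup [simp del] mult_FactGroup [simp del]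

definition conj_norm :: "'a \<Rightarrow> 'a set"
  where "conj_norm x = finprod quot (\<lambda>a. N #> (a \<otimes> x \<otimes> inv a)) P"

lemma K_carrier: "K \<subseteq> carrier G"
  using subgroup.subset[OF subgroup_K] .

lemma P_carrier: "P \<subseteq> carrier G"
  using subgroup.subset[OF subgroup_P] .

lemma N_subset: "N \<subseteq> K"
  using subgroup.subset[OF normal_imp_subgroup[OF normal_N]] by simp

lemma comm_group_quot: "comm_group quot"
proof -
  interpret K: group "G\<lparr>carrier := K\<rparr>"
    using subgroup_imp_group[OF subgroup_K] .
  interpret N: normal N "G\<lparr>carrier := K\<rparr>"
    using normal_N .
  show ?thesis
    using N.comm_group_FactGroup_of_derived_subset derived_subset
      derived_consistent[OF _ subgroup_K] by simp
qed

sublocale quot: comm_group quot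
  using comm_group_quot .

lemma coset_in_quot: "x \<in> K \<Longrightarrow> N #> x \<in> carrier quot"
  unfolding FactGroup_def RCOSETS_def by auto

lemma quot_one: "\<one>\<^bsub>quot\<^esub> = N"
  unfolding FactGroup_def by simp

lemma quot_mult: "x \<in> K \<Longrightarrow> y \<in> K \<Longrightarrow> (N #> x) \<otimes>\<^bsub>quot\<^esub> (N #> y) = N #> (x \<otimes> y)"
  using normal.rcos_sum[OF normal_N] unfolding FactGroup_def by simp

lemma conj_in_K: "a \<in> P \<Longrightarrow> x \<in> K \<Longrightarrow> a \<otimes> x \<otimes> inv a \<in> K"
  using normalizer_conj_closed[OF K_carrier] P_normalizes by blast

lemma conj_norm_factor_closed: "x \<in> K \<Longrightarrow> (\<lambda>a. N #> (a \<otimes> x \<otimes> inv a)) \<in> P \<rightarrow> carrier quot"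
  using coset_in_quot conj_in_K by blast

lemma conj_norm_closed: "x \<in> K \<Longrightarrow> conj_norm x \<in> carrier quot"
  unfolding conj_norm_def using quot.finprod_closed[OF conj_norm_factor_closed] .

lemma conj_norm_mult:
  assumes x: "x \<in> K" and y: "y \<in> K"
  shows "conj_norm (x \<otimes> y) = conj_norm x \<otimes>\<^bsub>quot\<^esub> conj_norm y"
proof -
  have "(N #> (a \<otimes> x \<otimes> inv a)) \<otimes>\<^bsub>quot\<^esub> (N #> (a \<otimes> y \<otimes> inv a)) = N #> (a \<otimes> (x \<otimes> y) \<otimes> inv a)"
    if a: "a \<in> P" for a
  proof -
    have "a \<otimes> (x \<otimes> y) \<otimes> inv a = (a \<otimes> x \<otimes> inv a) \<otimes> (a \<otimes> y \<otimes> inv a)"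
      using a x y P_carrier K_carrier by (simp add: m_assoc subsetD)
    then show ?thesis
      using quot_mult[OF conj_in_K[OF a x] conj_in_K[OF a y]] by simp
  qed
  then have "conj_norm (x \<otimes> y)
      = finprod quot (\<lambda>a. (N #> (a \<otimes> x \<otimes> inv a)) \<otimes>\<^bsub>quot\<^esub> (N #> (a \<otimes> y \<otimes> inv a))) P"
    unfolding conj_norm_def
    by (intro quot.finprod_cong') (use conj_norm_factor_closed[OF x] conj_norm_factor_closed[OF y] in auto)
  also have "\<dots> = conj_norm x \<otimes>\<^bsub>quot\<^esub> conj_norm y"
    unfolding conj_norm_def
    using quot.finprod_multf[OF conj_norm_factor_closed[OF x] conj_norm_factor_closed[OF y]] .
  finally show ?thesis .
qed

lemma conj_norm_one: "conj_norm \<one> = \<one>\<^bsub>quot\<^esub>"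
  unfolding conj_norm_def
proof (rule quot.finprod_one_eqI)
  fix a assume "a \<in> P"
  then show "N #> (a \<otimes> \<one> \<otimes> inv a) = \<one>\<^bsub>quot\<^esub>"
    using P_carrier N_subset K_carrier quot_one by (simp add: subsetD)
qed

lemma conj_norm_inv:
  assumes x: "x \<in> K"
  shows "conj_norm (inv x) = inv\<^bsub>quot\<^esub> (conj_norm x)"
proof -
  have inv_x: "inv x \<in> K"
    using subgroup.m_inv_closed[OF subgroup_K x] .
  have "conj_norm (inv x) \<otimes>\<^bsub>quot\<^esub> conj_norm x = \<one>\<^bsub>quot\<^esub>"
    using conj_norm_mult[OF inv_x x] conj_norm_one x K_carrier by (simp add: subsetD)
  then show ?thesis
    using quot.inv_equality conj_norm_closed[OF x] conj_norm_closed[OF inv_x] by simp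
qed

lemma conj_norm_conj:
  assumes b: "b \<in> P" and x: "x \<in> K"
  shows "conj_norm (b \<otimes> x \<otimes> inv b) = conj_norm x"
proof -
  define f where "f a = N #> (a \<otimes> x \<otimes> inv a)" for a
  have b_carrier: "b \<in> carrier G"
    using b P_carrier by blast
  have shift: "(\<lambda>a. a \<otimes> b) ` P = P"
    using subgroup.rcos_const[OF subgroup_P is_group b] unfolding r_coset_def by auto
  have "inj_on (\<lambda>a. a \<otimes> b) P"
    by (rule inj_onI) (use P_carrier b_carrier in \<open>auto simp: subsetD\<close>)
  have "conj_norm x = finprod quot f ((\<lambda>a. a \<otimes> b) ` P)"
    unfolding conj_norm_def shift f_def ..
  also have "\<dots> = finprod quot (\<lambda>a. f (a \<otimes> b)) P"
    using quot.finprod_reindex[OF _ \<open>inj_on (\<lambda>a. a \<otimes> b) P\<close>] conj_norm_factor_closed[OF x] shift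
    unfolding f_def by simp
  also have "\<dots> = conj_norm (b \<otimes> x \<otimes> inv b)"
    unfolding conj_norm_def
  proof (rule quot.finprod_cong')
    show "(\<lambda>a. N #> (a \<otimes> (b \<otimes> x \<otimes> inv b) \<otimes> inv a)) \<in> P \<rightarrow> carrier quot"
      using conj_norm_factor_closed[OF conj_in_K[OF b x]] .
    fix a assume "a \<in> P"
    then show "f (a \<otimes> b) = N #> (a \<otimes> (b \<otimes> x \<otimes> inv b) \<otimes> inv a)"
      unfolding f_def using b_carrier x P_carrier K_carrier
      by (simp add: m_assoc inv_mult_group subsetD)
  qed simp
  finally show ?thesis
    by simp
qed

lemma conj_norm_commutator:
  assumes k: "k \<in> K" and a: "a \<in> P"
  shows "conj_norm (k \<otimes> a \<otimes> inv k \<otimes> inv a) = \<one>\<^bsub>quot\<^esub>"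
proof -
  have aka: "a \<otimes> k \<otimes> inv a \<in> K"
    using conj_in_K[OF a k] .
  have "k \<otimes> a \<otimes> inv k \<otimes> inv a = k \<otimes> inv (a \<otimes> k \<otimes> inv a)"
    using k a K_carrier P_carrier by (simp add: m_assoc inv_mult_group subsetD)
  then have "conj_norm (k \<otimes> a \<otimes> inv k \<otimes> inv a) = conj_norm k \<otimes>\<^bsub>quot\<^esub> inv\<^bsub>quot\<^esub> conj_norm k"
    using conj_norm_mult[OF k subgroup.m_inv_closed[OF subgroup_K aka]] conj_norm_inv[OF aka]
      conj_norm_conj[OF a k] by simp
  also have "\<dots> = \<one>\<^bsub>quot\<^esub>"
    using quot.r_inv[OF conj_norm_closed[OF k]] .
  finally show ?thesis .
qed

lemma conj_norm_eq_one:
  assumes gen: "K \<subseteq> commutator_subgroup G K P" and x: "x \<in> K"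
  shows "conj_norm x = \<one>\<^bsub>quot\<^esub>"
proof -
  define Z where "Z = {x \<in> K. conj_norm x = \<one>\<^bsub>quot\<^esub>}"
  have "subgroup Z G"
  proof
    show "Z \<subseteq> carrier G"
      unfolding Z_def using K_carrier by blast
    show "\<one> \<in> Z"
      unfolding Z_def using conj_norm_one subgroup.one_closed[OF subgroup_K] by simp
  next
    fix x y assume "x \<in> Z" "y \<in> Z"
    then show "x \<otimes> y \<in> Z"
      unfolding Z_def using conj_norm_mult subgroup.m_closed[OF subgroup_K] by simp
  next
    fix x assume "x \<in> Z"
    then show "inv x \<in> Z"
      unfolding Z_def using conj_norm_inv subgroup.m_inv_closed[OF subgroup_K] by simp
  qed
  moreover have "{k \<otimes> a \<otimes> inv k \<otimes> inv a | k a. k \<in> K \<and> a \<in> P} \<subseteq> Z"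
  proof clarify
    fix k a assume k: "k \<in> K" and a: "a \<in> P"
    then have "k \<otimes> a \<otimes> inv k \<otimes> inv a \<in> commutator_subgroup G K P"
      unfolding commutator_subgroup_def by (blast intro: generate.incl)
    then have "k \<otimes> a \<otimes> inv k \<otimes> inv a \<in> K"
      using commutator_subgroup_subset[OF subgroup_K P_normalizes] by blast
    then show "k \<otimes> a \<otimes> inv k \<otimes> inv a \<in> Z"
      unfolding Z_def using conj_norm_commutator[OF k a] by blast
  qed
  ultimately have "commutator_subgroup G K P \<subseteq> Z"
    unfolding commutator_subgroup_def by (rule generate_subgroup_incl[rotated])
  then show ?thesis
    using gen x unfolding Z_def by blast
qed

lemma conj_norm_centralizer_in:
  assumes c: "c \<in> centralizer_in G K P"
  shows "conj_norm c = (N #> c) [^]\<^bsub>quot\<^esub> card P"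
proof -
  have cK: "c \<in> K" and comm: "\<And>a. a \<in> P \<Longrightarrow> c \<otimes> a = a \<otimes> c"
    using c unfolding centralizer_in_def by auto
  have "a \<otimes> c \<otimes> inv a = c" if "a \<in> P" for a
    using comm[OF that] that cK P_carrier K_carrier by (simp add: m_assoc subsetD flip: comm)
  then have "conj_norm c = finprod quot (\<lambda>a. N #> c) P"
    unfolding conj_norm_def
    by (intro quot.finprod_cong') (use coset_in_quot[OF cK] in auto)
  then show ?thesis
    using quot.finprod_const[OF coset_in_quot[OF cK]] by simp
qed

lemma centralizer_in_subset:
  assumes gen: "K \<subseteq> commutator_subgroup G K P" and cop: "coprime (card P) (card K)"
  shows "centralizer_in G K P \<subseteq> N"
proof
  fix c assume c: "c \<in> centralizer_in G K P"
  then have cK: "c \<in> K"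
    unfolding centralizer_in_def by blast
  have "(N #> c) [^]\<^bsub>quot\<^esub> card P = \<one>\<^bsub>quot\<^esub>"
    using conj_norm_centralizer_in[OF c] conj_norm_eq_one[OF gen cK] by simp
  moreover have "order quot dvd card K"
  proof -
    interpret K: group "G\<lparr>carrier := K\<rparr>"
      using subgroup_imp_group[OF subgroup_K] .
    have "card (rcosets\<^bsub>G\<lparr>carrier := K\<rparr>\<^esub> N) * card N = card K"
      using K.lagrange[OF normal_imp_subgroup[OF normal_N]] by (simp add: order_def)
    then show ?thesis
      unfolding order_def FactGroup_def by (metis dvd_triv_left partial_object.select_convs(1))
  qed
  then have "coprime (card P) (order quot)"
    using cop coprime_divisors dvd_refl by blast
  ultimately have "N #> c = N"
    using quot.pow_coprime_order_eq_one[OF coset_in_quot[OF cK]] quot_one by simp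
  moreover have "c \<in> N #> c"
    using rcos_self[OF _ incl_subgroup[OF subgroup_K normal_imp_subgroup[OF normal_N]]] cK K_carrier
    by blast
  ultimately show "c \<in> N"
    by simp
qed

end

context group begin

lemma coprime_centralizer_in_subset_frattini:
  assumes K: "subgroup K G" and fin: "finite K" and card_K: "card K = q ^ m"
    and q: "Factorial_Ring.prime q" and P: "subgroup P G" and fin_P: "finite P"
    and PK: "P \<subseteq> normalizer G K" and gen: "K \<subseteq> commutator_subgroup G K P"
    and cop: "coprime (card P) (card K)"
  shows "centralizer_in G K P \<subseteq> frattini G K"
proof -
  have "centralizer_in G K P \<subseteq> M" if max: "maximal_subgroup_of G M K" for M
  proof -
    have M: "subgroup M G" and MK: "M \<subset> K"
      using max unfolding maximal_subgroup_of_def by auto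
    have KN: "K \<subseteq> normalizer G M"
      using maximal_subgroup_of_p_group_normal[OF K fin card_K q max] .
    have normal: "M \<lhd> G\<lparr>carrier := K\<rparr>"
      using normal_in_subgroupI[OF M K _ KN] MK by blast
    have derived: "derived G K \<subseteq> M"
      using derived_subset_maximal_normal_subgroup[OF K max KN] .
    interpret quotient_norm G K M P
      by (rule quotient_norm.intro[OF is_group quotient_norm_axioms.intro[OF K normal derived P fin_P PK]])
    show ?thesis
      using centralizer_in_subset[OF gen cop] .
  qed
  then show ?thesis
    unfolding frattini_def centralizer_in_def by blast
qed

section \<open>Coprime action and the Frattini argument\<close>

lemma conj_rcos_commutator_subgroup_closed:
  assumes H: "subgroup H G" and P: "subgroup P G" and PH: "P \<subseteq> normalizer G H"
    and y: "y \<in> H" and a: "a \<in> P" and z: "z \<in> commutator_subgroup G H P #> y"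
  shows "a \<otimes> z \<otimes> inv a \<in> commutator_subgroup G H P #> y"
proof -
  define K where "K = commutator_subgroup G H P"
  have H_carrier: "H \<subseteq> carrier G" and P_carrier: "P \<subseteq> carrier G"
    using H P subgroup.subset by auto
  have K: "subgroup K G"
    unfolding K_def using subgroup_commutator_subgroup[OF H_carrier P_carrier] .
  obtain k where k: "k \<in> K" "z = k \<otimes> y"
    using z unfolding K_def r_coset_def by blast
  have "y \<otimes> a \<otimes> inv y \<otimes> inv a \<in> K"
    unfolding K_def commutator_subgroup_def using y a by (blast intro: generate.incl)
  moreover have "a \<otimes> k \<otimes> inv a \<in> K"
    using normalizer_conj_closed[OF subgroup.subset[OF K]] normalizer_commutator_subgroup[OF H_carrier P_carrier]
      PH subgroup_subset_normalizer[OF P] a k(1) unfolding K_def by blast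
  ultimately have "(a \<otimes> k \<otimes> inv a) \<otimes> inv (y \<otimes> a \<otimes> inv y \<otimes> inv a) \<in> K"
    using subgroup.m_closed[OF K] subgroup.m_inv_closed[OF K] by blast
  moreover have "a \<otimes> z \<otimes> inv a = (a \<otimes> k \<otimes> inv a) \<otimes> inv (y \<otimes> a \<otimes> inv y \<otimes> inv a) \<otimes> y"
    using k a y H_carrier P_carrier subgroup.subset[OF K] by (simp add: m_assoc inv_mult_group subsetD)
  ultimately show ?thesis
    unfolding K_def[symmetric] r_coset_def by blast
qed

lemma coprime_action_decomposition:
  assumes H: "subgroup H G" and fin: "finite H" and P: "subgroup P G" and card_P: "card P = p ^ n"
    and p: "Factorial_Ring.prime p" and PH: "P \<subseteq> normalizer G H" and not_dvd: "\<not> p dvd card H"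
  shows "H \<subseteq> commutator_subgroup G H P <#> centralizer_in G H P"
proof
  fix y assume y: "y \<in> H"
  define K where "K = commutator_subgroup G H P"
  have H_carrier: "H \<subseteq> carrier G" and P_carrier: "P \<subseteq> carrier G"
    using H P subgroup.subset by auto
  have K: "subgroup K G" and KH: "K \<subseteq> H"
    unfolding K_def using subgroup_commutator_subgroup[OF H_carrier P_carrier]
      commutator_subgroup_subset[OF H PH] by auto
  have K_carrier: "K \<subseteq> carrier G" and y_carrier: "y \<in> carrier G"
    using KH H_carrier y by auto
  have coset_carrier: "K #> y \<subseteq> carrier G"
    using r_coset_subset_G[OF K_carrier y_carrier] .
  have "card (K #> y) = card K"
    using card_rcosets_equal[OF rcosetsI[OF K_carrier y_carrier] K_carrier] by simp
  then have not_dvd_coset: "\<not> p dvd card (K #> y)"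
    using not_dvd card_subgroup_dvd[OF K H KH] dvd_trans by metis
  obtain z where z: "z \<in> K #> y" and fixed: "\<And>a. a \<in> P \<Longrightarrow> a \<otimes> z \<otimes> inv a = z"
  proof (rule p_subgroup_action_fixed_point[OF P card_P p _ _ _ _ not_dvd_coset,
        where f = "\<lambda>a z. a \<otimes> z \<otimes> inv a"])
    show "finite (K #> y)"
      using fin KH y unfolding r_coset_def by (auto intro: finite_subset)
    show "a \<otimes> z \<otimes> inv a \<in> K #> y" if "a \<in> P" "z \<in> K #> y" for a z
      unfolding K_def using conj_rcos_commutator_subgroup_closed[OF H P PH y] that K_def by blast
    show "\<one> \<otimes> z \<otimes> inv \<one> = z" if "z \<in> K #> y" for z
      using that coset_carrier by (simp add: subsetD)
    show "a \<otimes> b \<otimes> z \<otimes> inv (a \<otimes> b) = a \<otimes> (b \<otimes> z \<otimes> inv b) \<otimes> inv a"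
      if "a \<in> P" "b \<in> P" "z \<in> K #> y" for a b z
      using that coset_carrier P_carrier by (simp add: m_assoc inv_mult_group subsetD)
  qed blast
  obtain k where k: "k \<in> K" "z = k \<otimes> y"
    using z unfolding r_coset_def by blast
  have "z \<in> centralizer_in G H P"
    using centralizer_inI[OF _ H_carrier P_carrier fixed] k KH y subgroup.m_closed[OF H] by auto
  moreover have "y = inv k \<otimes> z"
    using k y_carrier K_carrier by (simp add: subsetD)
  ultimately show "y \<in> K <#> centralizer_in G H P"
    unfolding set_mult_def using subgroup.m_inv_closed[OF K k(1)] by blast
qed

lemma coprime_commutator_subgroup_idem:
  assumes H: "subgroup H G" and fin: "finite H" and P: "subgroup P G" and card_P: "card P = p ^ n"
    and p: "Factorial_Ring.prime p" and PH: "P \<subseteq> normalizer G H" and not_dvd: "\<not> p dvd card H"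
  shows "commutator_subgroup G H P
    \<subseteq> commutator_subgroup G (commutator_subgroup G H P) P"
proof (rule commutator_subgroup_subset_of_decomposition)
  show "H \<subseteq> commutator_subgroup G H P <#> centralizer_in G H P"
    using coprime_action_decomposition[OF H fin P card_P p PH not_dvd] .
  show "commutator_subgroup G H P \<subseteq> carrier G"
    using commutator_subgroup_subset[OF H PH] subgroup.subset[OF H] by blast
qed (use H P subgroup.subset in auto)

lemma coprime_commutator_centralizer_in_subset_frattini:
  assumes H: "subgroup H G" and fin: "finite H" and card_H: "card H = q ^ m"
    and P: "subgroup P G" and fin_P: "finite P" and card_P: "card P = p ^ n"
    and p: "Factorial_Ring.prime p" and q: "Factorial_Ring.prime q" and pq: "p \<noteq> q"
    and PH: "P \<subseteq> normalizer G H"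
  shows "centralizer_in G (commutator_subgroup G H P) P
    \<subseteq> frattini G (commutator_subgroup G H P)"
proof -
  define K where "K = commutator_subgroup G H P"
  have H_carrier: "H \<subseteq> carrier G" and P_carrier: "P \<subseteq> carrier G"
    using H P subgroup.subset by auto
  have K: "subgroup K G" and KH: "K \<subseteq> H"
    unfolding K_def using subgroup_commutator_subgroup[OF H_carrier P_carrier]
      commutator_subgroup_subset[OF H PH] by auto
  obtain k where card_K: "card K = q ^ k"
    using card_subgroup_dvd[OF K H KH] card_H divides_primepow_nat[OF q] by auto
  have not_dvd: "\<not> p dvd card H"
    using card_H p q pq by (metis prime_dvd_power primes_dvd_imp_eq)
  have "P \<subseteq> normalizer G K"
    unfolding K_def using normalizer_commutator_subgroup[OF H_carrier P_carrier]
      PH subgroup_subset_normalizer[OF P] by blast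
  moreover have "K \<subseteq> commutator_subgroup G K P"
    unfolding K_def using coprime_commutator_subgroup_idem[OF H fin P card_P p PH not_dvd] .
  moreover have "coprime (card P) (card K)"
    using card_P card_K p q pq by (simp add: primes_coprime)
  ultimately show ?thesis
    unfolding K_def[symmetric]
    using coprime_centralizer_in_subset_frattini[OF K _ card_K q P fin_P] KH fin finite_subset by blast
qed

lemma frattini_argument:
  assumes H: "subgroup H G" and fin: "finite H" and P: "subgroup P G" and PH: "P \<subseteq> H"
    and card_P: "card P = p ^ n" and p: "Factorial_Ring.prime p"
    and card_H: "card H = m * card P" and not_dvd: "\<not> p dvd m"
    and x: "x \<in> normalizer G H"
  shows "x \<in> H <#> normalizer G P"
proof -
  have H_carrier: "H \<subseteq> carrier G" and P_carrier: "P \<subseteq> carrier G"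
    using H P subgroup.subset by auto
  have x_carrier: "x \<in> carrier G"
    using x normalizer_subset_carrier[OF H_carrier] by blast
  define B where "B = (\<lambda>a. x \<otimes> a \<otimes> inv x) ` P"
  have B: "subgroup B G" and card_B: "card B = p ^ n"
    unfolding B_def using conj_image_subgroup[OF x_carrier P] card_P by auto
  have BH: "B \<subseteq> H"
    unfolding B_def using normalizer_conj_closed[OF H_carrier x] PH by blast
  have "card P > 0"
    using card_P prime_gt_0_nat[OF p] by simp
  then have "card ((\<lambda>h. P #> h) ` H) = m"
    using card_rcosets_in_subgroup[OF P H PH] card_H by simp
  then have "card {C \<in> (\<lambda>h. P #> h) ` H. \<forall>b\<in>B. C #> b = C} mod p \<noteq> 0"
    using rcosets_fixed_points_cong[OF P H PH fin B BH card_B p] not_dvd by (simp add: dvd_eq_mod_eq_0)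
  then have "{C \<in> (\<lambda>h. P #> h) ` H. \<forall>b\<in>B. C #> b = C} \<noteq> {}"
    by (intro notI) simp
  then obtain g where g: "g \<in> H" and fixed: "\<And>b. b \<in> B \<Longrightarrow> P #> g #> b = P #> g"
    by blast
  have g_carrier: "g \<in> carrier G"
    using g H_carrier by blast
  have "g \<otimes> x \<in> normalizer G P"
  proof (rule finite_normalizerI[OF _ P_carrier])
    show "finite P"
      using fin PH finite_subset by blast
    show "g \<otimes> x \<in> carrier G"
      using g_carrier x_carrier by simp
    fix a assume a: "a \<in> P"
    then have "x \<otimes> a \<otimes> inv x \<in> B"
      unfolding B_def by blast
    then have "g \<otimes> (x \<otimes> a \<otimes> inv x) \<otimes> inv g \<in> P"
      using rcos_fixed_imp_conj_mem[OF P g_carrier _ fixed] x_carrier a P_carrier by (simp add: subsetD)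
    then show "g \<otimes> x \<otimes> a \<otimes> inv (g \<otimes> x) \<in> P"
      using g_carrier x_carrier a P_carrier by (simp add: m_assoc inv_mult_group subsetD)
  qed
  moreover have "x = inv g \<otimes> (g \<otimes> x)"
    using g_carrier x_carrier by simp
  ultimately show ?thesis
    unfolding set_mult_def using subgroup.m_inv_closed[OF H g] by blast
qed

lemma subset_set_mult_Int_normalizer:
  assumes Q: "subgroup Q G" and fin: "finite Q" and Q1: "subgroup Q1 G" and Q1Q: "Q1 \<subseteq> Q"
    and P: "subgroup P G" and card_P: "card P = p ^ n" and p: "Factorial_Ring.prime p"
    and not_dvd: "\<not> p dvd card Q"
    and PN: "P \<subseteq> normalizer G Q1" and QN: "Q \<subseteq> normalizer G (Q1 <#> P)"
  shows "Q \<subseteq> Q1 <#> (Q \<inter> normalizer G P)"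
proof
  fix x assume x: "x \<in> Q"
  have Q1_carrier: "Q1 \<subseteq> carrier G" and P_carrier: "P \<subseteq> carrier G"
    using Q1 P subgroup.subset by auto
  have N_P: "subgroup (normalizer G P) G"
    using normalizer_imp_subgroup[OF P_carrier] .
  have fin_Q1: "finite Q1"
    using fin Q1Q finite_subset by blast
  have fin_P: "finite P"
    using card_P prime_gt_0_nat[OF p] card.infinite by fastforce
  have not_dvd_Q1: "\<not> p dvd card Q1"
    using not_dvd card_subgroup_dvd[OF Q1 Q Q1Q] dvd_trans by blast
  then have "Q1 \<inter> P = {\<one>}"
    using coprime_subgroups_Int[OF P Q1] card_P p by (simp add: prime_imp_coprime Int_commute)
  then have card_Q1P: "card (Q1 <#> P) = card Q1 * card P"
    using card_set_mult_Int_one[OF fin_Q1 fin_P Q1 P] by blast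
  have "finite (Q1 <#> P)"
    unfolding set_mult_def using fin_Q1 fin_P by simp
  then have "x \<in> (Q1 <#> P) <#> normalizer G P"
    using frattini_argument[OF subgroup_set_mult_normalizer(1)[OF Q1 P PN] _ P
        subset_set_mult_right[OF Q1 P_carrier] card_P p card_Q1P not_dvd_Q1] QN x by blast
  also have "\<dots> = Q1 <#> normalizer G P"
    using set_mult_assoc[OF Q1_carrier P_carrier subgroup.subset[OF N_P]]
      set_mult_subgroup_absorb_left[OF N_P P subgroup_subset_normalizer[OF P]] by simp
  finally show "x \<in> Q1 <#> (Q \<inter> normalizer G P)"
    using set_mult_Int_subgroup[OF Q Q1Q subgroup.subset[OF N_P]] x by blast
qed

lemma commutator_normalizer_decomposition:
  assumes Q: "subgroup Q G" and fin: "finite Q" and Q1: "subgroup Q1 G" and Q1Q: "Q1 \<subseteq> Q"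
    and P: "subgroup P G" and card_P: "card P = p ^ n" and p: "Factorial_Ring.prime p"
    and not_dvd: "\<not> p dvd card Q"
    and PN: "P \<subseteq> normalizer G Q1" and QN: "Q \<subseteq> normalizer G (Q1 <#> P)"
  shows "Q = commutator_subgroup G Q1 P <#> (Q \<inter> normalizer G P)"
proof -
  define K where "K = commutator_subgroup G Q1 P"
  define NQ where "NQ = Q \<inter> normalizer G P"
  define C where "C = centralizer_in G Q1 P"
  have Q_carrier: "Q \<subseteq> carrier G" and Q1_carrier: "Q1 \<subseteq> carrier G" and P_carrier: "P \<subseteq> carrier G"
    using Q Q1 P subgroup.subset by auto
  have KQ1: "K \<subseteq> Q1"
    unfolding K_def using commutator_subgroup_subset[OF Q1 PN] .
  have NQ: "subgroup NQ G" and NQ_Q: "NQ \<subseteq> Q"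
    unfolding NQ_def using subgroups_Inter_pair[OF Q normalizer_imp_subgroup[OF P_carrier]] by auto
  have C_NQ: "C \<subseteq> NQ"
    unfolding NQ_def using centralizer_in_subset_normalizer[OF Q1_carrier P_carrier] Q1Q
    unfolding C_def centralizer_in_def by blast
  have "finite Q1" "\<not> p dvd card Q1"
    using fin Q1Q finite_subset not_dvd card_subgroup_dvd[OF Q1 Q Q1Q] dvd_trans by blast+
  then have Q1_decomposition: "Q1 \<subseteq> K <#> C"
    unfolding K_def C_def using coprime_action_decomposition[OF Q1 _ P card_P p PN] by blast
  have "Q \<subseteq> Q1 <#> NQ"
    unfolding NQ_def using subset_set_mult_Int_normalizer[OF Q fin Q1 Q1Q P card_P p not_dvd PN QN] .
  also have "\<dots> \<subseteq> (K <#> C) <#> NQ"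
    using mono_set_mult[OF Q1_decomposition subset_refl] .
  also have "\<dots> = K <#> (C <#> NQ)"
    using KQ1 C_NQ NQ_Q Q1_carrier Q_carrier by (intro set_mult_assoc) auto
  also have "\<dots> \<subseteq> K <#> NQ"
    using mono_set_mult[OF subset_refl set_mult_subset_subgroup[OF NQ C_NQ subset_refl]] .
  finally have "Q \<subseteq> K <#> NQ" .
  moreover have "K <#> NQ \<subseteq> Q"
    using set_mult_subset_subgroup[OF Q _ NQ_Q] KQ1 Q1Q by blast
  ultimately show ?thesis
    unfolding K_def NQ_def by blast
qed

end

locale coprime_normalizing_triple = group G for G (structure) +
  fixes p q :: nat and P Q Q1 :: "'a set"
  assumes finite_carrier: "finite (carrier G)"
    and prime_p: "Factorial_Ring.prime p" and prime_q: "Factorial_Ring.prime q" and p_neq_q: "p \<noteq> q"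
    and p_subgroup_P: "p_subgroup G p P" and q_subgroup_Q: "p_subgroup G q Q"
    and q_subgroup_Q1: "p_subgroup G q Q1" and Q1_subset_Q: "Q1 \<subseteq> Q"
    and P_normalizes_Q1: "P \<subseteq> normalizer G Q1"
    and Q_normalizes_Q1P: "Q \<subseteq> normalizer G (Q1 <#> P)"
begin

abbreviation K where "K \<equiv> commutator_subgroup G Q1 P"

lemma P: "subgroup P G" and Q: "subgroup Q G" and Q1: "subgroup Q1 G"
  using p_subgroup_P q_subgroup_Q q_subgroup_Q1 unfolding p_subgroup_def by auto

lemma finite_P: "finite P" and finite_Q: "finite Q" and finite_Q1: "finite Q1"
  using finite_carrier P Q Q1 subgroup.subset finite_subset by metis+

lemma card_P: obtains a where "card P = p ^ a"
  using p_subgroup_P unfolding p_subgroup_def by blast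

lemma card_Q1: obtains c where "card Q1 = q ^ c"
  using q_subgroup_Q1 unfolding p_subgroup_def by blast

lemma not_dvd_card_Q: "\<not> p dvd card Q" and not_dvd_card_P: "\<not> q dvd card P"
  using p_subgroup_P q_subgroup_Q prime_p prime_q p_neq_q unfolding p_subgroup_def
  by (metis prime_dvd_power primes_dvd_imp_eq)+

lemma Q_Int_P: "Q \<inter> P = {\<one>}"
  using coprime_subgroups_Int[OF Q P] p_subgroup_P q_subgroup_Q prime_p prime_q p_neq_q
  unfolding p_subgroup_def by (auto simp: primes_coprime)

lemma Q_normalizes_Q1: "Q \<subseteq> normalizer G Q1"
  using normalizer_subset_of_set_mult[OF Q Q1 Q1_subset_Q subgroup.subset[OF P]
      Q_normalizes_Q1P Q_Int_P] .

lemma subgroup_QP: "subgroup (Q <#> P) G"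
  using subgroup_set_mult_of_normalizer_set_mult[OF Q Q1 Q1_subset_Q P P_normalizes_Q1
      Q_normalizes_Q1P] .

lemma Q_subset_QP: "Q \<subseteq> Q <#> P" and P_subset_QP: "P \<subseteq> Q <#> P"
  using subset_set_mult_left[OF subgroup.subset[OF Q] P] subset_set_mult_right[OF Q subgroup.subset[OF P]]
  by auto

lemma sylow_Q: "sylow_subgroup (G\<lparr>carrier := Q <#> P\<rparr>) q Q"
  and sylow_P: "sylow_subgroup (G\<lparr>carrier := Q <#> P\<rparr>) p P"
proof -
  have card_QP: "card (Q <#> P) = card Q * card P"
    using card_set_mult_Int_one[OF finite_Q finite_P Q P Q_Int_P] .
  show "sylow_subgroup (G\<lparr>carrier := Q <#> P\<rparr>) q Q"
    using q_subgroup_Q sylow_subgroup_of_coprime_index[OF subgroup_QP Q Q_subset_QP _ prime_q card_QP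
        not_dvd_card_P] unfolding p_subgroup_def by blast
  show "sylow_subgroup (G\<lparr>carrier := Q <#> P\<rparr>) p P"
    using p_subgroup_P sylow_subgroup_of_coprime_index[OF subgroup_QP P P_subset_QP _ prime_p _
        not_dvd_card_Q] card_QP unfolding p_subgroup_def by (metis mult.commute)
qed

lemma Q1P_normal: "Q1 <#> P \<lhd> G\<lparr>carrier := Q <#> P\<rparr>"
proof -
  have Q1P: "subgroup (Q1 <#> P) G"
    using subgroup_set_mult_normalizer(1)[OF Q1 P P_normalizes_Q1] .
  have "P \<subseteq> normalizer G (Q1 <#> P)"
    using subset_set_mult_right[OF Q1 subgroup.subset[OF P]] subgroup_subset_normalizer[OF Q1P] by blast
  then show ?thesis
    using normal_in_set_mult[OF Q1P Q P subgroup_QP _ Q_normalizes_Q1P] mono_set_mult[OF Q1_subset_Q]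
    by blast
qed

lemma Q1_normal: "Q1 \<lhd> G\<lparr>carrier := Q <#> P\<rparr>"
  using normal_in_set_mult[OF Q1 Q P subgroup_QP _ Q_normalizes_Q1 P_normalizes_Q1]
    Q1_subset_Q Q_subset_QP by blast

lemma Q_eq: "Q = K <#> (Q \<inter> normalizer G P)"
  using card_P commutator_normalizer_decomposition[OF Q finite_Q Q1 Q1_subset_Q P _ prime_p
      not_dvd_card_Q P_normalizes_Q1 Q_normalizes_Q1P] by metis

lemma K: "subgroup K G" and K_subset_Q1: "K \<subseteq> Q1"
  using subgroup_commutator_subgroup[OF subgroup.subset[OF Q1] subgroup.subset[OF P]]
    commutator_subgroup_subset[OF Q1 P_normalizes_Q1] by auto

lemma QP_normalizes_K: "Q \<subseteq> normalizer G K" "P \<subseteq> normalizer G K"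
proof -
  have KN: "normalizer G Q1 \<inter> normalizer G P \<subseteq> normalizer G K"
    using normalizer_commutator_subgroup[OF subgroup.subset[OF Q1] subgroup.subset[OF P]] .
  then show "P \<subseteq> normalizer G K"
    using P_normalizes_Q1 subgroup_subset_normalizer[OF P] by blast
  show "Q \<subseteq> normalizer G K"
    using set_mult_subset_subgroup[OF normalizer_imp_subgroup[OF subgroup.subset[OF K]]]
      subgroup_subset_normalizer[OF K] KN Q_normalizes_Q1 Q_eq by blast
qed

lemma K_normal: "K \<lhd> G\<lparr>carrier := Q <#> P\<rparr>"
  using normal_in_set_mult[OF K Q P subgroup_QP _ QP_normalizes_K] K_subset_Q1 Q1_subset_Q Q_subset_QP
  by blast

lemma K_Int_normalizer: "K \<inter> (Q \<inter> normalizer G P) = centralizer_in G K P"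
  using Int_normalizer_eq_centralizer_in[OF K P QP_normalizes_K(2) _ Q_Int_P] K_subset_Q1 Q1_subset_Q
  by blast

lemma centralizer_in_K_subset_frattini: "centralizer_in G K P \<subseteq> frattini G K"
  using card_P card_Q1 coprime_commutator_centralizer_in_subset_frattini[OF Q1 finite_Q1 _ P finite_P _
      prime_p prime_q p_neq_q P_normalizes_Q1] by metis

end

theorem lemma5p3:
  fixes G (structure) and p q :: nat and P Q Q1 :: "'a set"
  assumes "group G" and "finite (carrier G)"
    and "Factorial_Ring.prime p" and "Factorial_Ring.prime q" and "odd p" and "odd q" and "p \<noteq> q"
    and "p_subgroup G p P" and "p_subgroup G q Q" and "p_subgroup G q Q1" and "Q1 \<subseteq> Q"
    and "P \<subseteq> normalizer G Q1"
    and "Q \<subseteq> normalizer G (Q1 <#> P)"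
  shows "subgroup (Q <#> P) G
    \<and> sylow_subgroup (G\<lparr>carrier := Q <#> P\<rparr>) q Q
    \<and> sylow_subgroup (G\<lparr>carrier := Q <#> P\<rparr>) p P
    \<and> Q1 <#> P \<lhd> G\<lparr>carrier := Q <#> P\<rparr>
    \<and> Q1 \<lhd> G\<lparr>carrier := Q <#> P\<rparr>
    \<and> Q = commutator_subgroup G Q1 P <#> (Q \<inter> normalizer G P)
    \<and> commutator_subgroup G Q1 P \<lhd> G\<lparr>carrier := Q <#> P\<rparr>
    \<and> commutator_subgroup G Q1 P \<inter> (Q \<inter> normalizer G P)
           = centralizer_in G (commutator_subgroup G Q1 P) P
    \<and> centralizer_in G (commutator_subgroup G Q1 P) P
           \<subseteq> frattini G (commutator_subgroup G Q1 P)"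
proof -
  interpret coprime_normalizing_triple G p q P Q Q1
    using assms by (simp add: coprime_normalizing_triple_def coprime_normalizing_triple_axioms_def)
  show ?thesis
    using subgroup_QP sylow_Q sylow_P Q1P_normal Q1_normal Q_eq K_normal K_Int_normalizer
      centralizer_in_K_subset_frattini by blast
qed

end
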